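(* Consider $d=2$ with either weak or strong coupling (see context). Let $\gamma\in(0,1/10)$ and let $\mathcal{M}_\gamma$ be a set as in the context. Then for every (sufficiently large) $m\in\mathcal{M}_\gamma$ there exists a new eigenvalue $\lambda\in\Lambda$ with $|\lambda-m|\le\gamma$ and $$H_m'(\lambda)\le (1+O(\gamma))\,\frac{r_2(m)}{(m-\lambda)^2},$$ where the implied constant in $O(\gamma)$ is absolute (as $\gamma\to0$).
   Context: For an integer $n$, $r_2(n)=\#\{\xi\in\mathbb{Z}^2:|\xi|^2=n\}$, $\mathcal{N}_2=\{n:r_2(n)>0\}$, and $n_+(\lambda)$ is the smallest element of $\mathcal{N}_2$ larger than $\lambda$. Fix $C\in\mathbb{R}$ and (for strong coupling) $\eta\in(131/146,1)$. Let $I(\lambda)=\mathcal{N}_2$ (weak coupling) or $I(\lambda)=\mathcal{N}_2\cap[n_+(\lambda)-n_+(\lambda)^\eta,\,n_+(\lambda)+n_+(\lambda)^\eta]$ (strong coupling). The set $\Lambda$ of new eigenvalues is the set of real $\lambda\notin\mathcal{N}_2$ solving $\sum_{n\in I(\lambda)}r_2(n)\big(\frac{1}{n-\lambda}-\frac{n}{n^2+1}\big)=C$ (with strict inequality $|n-n_+(\lambda)|<n_+(\lambda)^\eta$ in the strong coupling window). For $m\in\mathcal{N}_2$, $H_m'(\lambda):=\sum_{n\in I(\lambda)\setminus\{m\}}\frac{r_2(n)}{(n-\lambda)^2}$. $\mathcal{M}_\gamma\subset\mathcal{N}_2$ is an infinite set each of whose elements has the form $m=n^2+1$ with $n$ a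 positive integer, $r_2(m)\le32$ and $r_2(m+3)\ge10\,r_2(m)/\gamma^2$. *)

theory Defs
  imports "HOL-Analysis.Analysis"
begin

definition r2 :: "nat \<Rightarrow> nat" where
  "r2 n = card {p :: int \<times> int. (fst p)\<^sup>2 + (snd p)\<^sup>2 = int n}"

definition N2 :: "nat set" where
  "N2 = {n. r2 n > 0}"

definition nplus :: "real \<Rightarrow> nat" where
  "nplus lam = (LEAST n. n \<in> N2 \<and> real n > lam)"

datatype coupling = Weak | Strong

definition Iset :: "coupling \<Rightarrow> real \<Rightarrow> real \<Rightarrow> nat set" where
  "Iset cpl eta lam = (case cpl of
      Weak \<Rightarrow> N2
    | Strong \<Rightarrow> {n \<in> N2. \<bar>real n - real (nplus lam)\<bar> < real (nplus lam) powr eta})"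

definition NewEig :: "coupling \<Rightarrow> real \<Rightarrow> real \<Rightarrow> real set" where
  "NewEig cpl eta C = {lam. lam \<notin> real ` N2 \<and>
     (\<Sum>\<^sub>\<infinity> n \<in> Iset cpl eta lam.
        real (r2 n) * (1 / (real n - lam) - real n / ((real n)\<^sup>2 + 1))) = C}"

definition Hderiv :: "coupling \<Rightarrow> real \<Rightarrow> nat \<Rightarrow> real \<Rightarrow> real" where
  "Hderiv cpl eta m lam =
     (\<Sum>\<^sub>\<infinity> n \<in> Iset cpl eta lam - {m}. real (r2 n) / (real n - lam)\<^sup>2)"

definition is_M_gamma :: "real \<Rightarrow> nat set \<Rightarrow> bool" where
  "is_M_gamma gamma M \<longleftrightarrow> M \<subseteq> N2 \<and> infinite M \<and>
     (\<forall>m \<in> M. (\<exists>n::nat. n > 0 \<and> m = n\<^sup>2 + 1) \<and> r2 m \<le> 32 \<and>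
        real (r2 (m + 3)) \<ge> 10 * real (r2 m) / gamma\<^sup>2)"

end

theory Submission
  imports Defs "HOL-Real_Asymp.Real_Asymp"
begin

text \<open>
  Write F(x) for the sum over n \<in> S of r2(n) (1/(n - x) - n/(n^2 + 1)). Near a pole m \<in> S it splits as
  F(x) = F(m) + r2(m)/(m - x) + (x - m) D(x), where the divided-difference sum D(x) over S - {m} is
  comparable to H_m': on |x - m| \<le> \<gamma> it is at least ((1 - \<gamma>)/(1 + \<gamma>))^2 H_m'(\<lambda>) and at most
  4 H_m'(m). The hypothesis r2(m + 3) \<ge> 10 r2(m)/\<gamma>^2 makes \<gamma> D(m \<plusminus> \<gamma>) \<ge> r2(m)/\<gamma> + 1/10, so F - C
  changes sign within distance \<gamma> of m, on the side determined by the sign of F(m) - C. At that root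
  \<lambda>, with u = |\<lambda> - m|, the equation itself gives D(\<lambda>) u^2 \<le> r2(m) + u/10, whence
  H_m'(\<lambda>) \<le> (1 + 6\<gamma>) r2(m)/u^2.

  In strong coupling the window I(\<lambda>) jumps at m; but the windows on the two sides differ only on an
  annulus of width O(1) at distance about m^\<eta>, where the terms are O(\<surd>m / m^\<eta>), so the two values
  of F(m) differ by at most 1/5 and one of the two sides always works.
\<close>

lemma r2_le_sqrt: "real (r2 n) \<le> 4 * sqrt (real n) + 2"
proof -
  define P where "P = {p :: int \<times> int. (fst p)\<^sup>2 + (snd p)\<^sup>2 = int n}"
  define k where "k = \<lfloor>sqrt (real n)\<rfloor>"
  have k0: "k \<ge> 0" unfolding k_def by simp
  have coord_bound: "\<bar>a\<bar> \<le> k" if "a\<^sup>2 \<le> int n" for a :: int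
  proof -
    have "real_of_int (a\<^sup>2) \<le> real n" using that by (metis of_int_le_iff of_int_of_nat_eq)
    hence "sqrt (real_of_int (a\<^sup>2)) \<le> sqrt (real n)" by (rule real_sqrt_le_mono)
    thus ?thesis unfolding k_def by (simp add: le_floor_iff)
  qed
  \<comment> \<open>A representation is determined by its first coordinate and the sign of the second.\<close>
  define code where "code = (\<lambda>p :: int \<times> int. (fst p, snd p \<ge> 0))"
  have code_into: "code ` P \<subseteq> {-k..k} \<times> (UNIV :: bool set)"
  proof
    fix q assume "q \<in> code ` P"
    then obtain a b where ab: "(a, b) \<in> P" "q = (a, b \<ge> 0)" unfolding code_def by auto
    have "a\<^sup>2 + b\<^sup>2 = int n" using ab(1) unfolding P_def by simp
    hence "a\<^sup>2 \<le> int n" using zero_le_power2[of b] by linarith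
    from coord_bound[OF this] show "q \<in> {-k..k} \<times> UNIV" using ab by auto
  qed
  have "inj_on code P"
  proof (rule inj_onI)
    fix p q assume pq: "p \<in> P" "q \<in> P" "code p = code q"
    hence fst_eq: "fst p = fst q" and sign_eq: "(snd p \<ge> 0) = (snd q \<ge> 0)"
      unfolding code_def by auto
    have "(snd p)\<^sup>2 = (snd q)\<^sup>2" using pq(1,2) fst_eq unfolding P_def by auto
    hence "snd p = snd q" using sign_eq by (auto simp: power2_eq_iff)
    thus "p = q" using fst_eq by (simp add: prod_eq_iff)
  qed
  hence "card P = card (code ` P)" by (simp add: card_image)
  also have "\<dots> \<le> card ({-k..k} \<times> (UNIV :: bool set))" by (rule card_mono[OF _ code_into]) simp
  also have "\<dots> = nat (2*k+1) * 2" by (simp add: card_cartesian_product)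
  finally have "real (r2 n) \<le> real (nat (2*k+1) * 2)" unfolding r2_def P_def by simp
  also have "\<dots> = (2 * real_of_int k + 1) * 2" using k0 by simp
  also have "\<dots> \<le> (2 * sqrt (real n) + 1) * 2" unfolding k_def by simp
  finally show ?thesis by simp
qed

lemma r2_le_6_sqrt:
  assumes "n \<ge> 1" shows "real (r2 n) \<le> 6 * sqrt (real n)"
proof -
  have "1 \<le> sqrt (real n)" using assms by simp
  thus ?thesis using r2_le_sqrt[of n] by linarith
qed

lemma summable_r2_div_square: "summable (\<lambda>n. real (r2 n) / (real n)\<^sup>2)"
proof (rule summable_comparison_test_ev)
  show "summable (\<lambda>n::nat. 6 * real n powr (-3/2))"
    by (intro summable_mult) (simp add: summable_real_powr_iff)
  have "norm (real (r2 n) / (real n)\<^sup>2) \<le> 6 * real n powr (-3/2)" if "n \<ge> 1" for n :: nat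
  proof -
    have pos: "real n > 0" using that by simp
    have "real n powr (-3/2) = real n powr (1/2 - 2)" by simp
    also have "\<dots> = real n powr (1/2) / real n powr 2" by (rule powr_diff)
    also have "\<dots> = sqrt (real n) / (real n)\<^sup>2"
      using pos by (simp add: powr_half_sqrt powr_numeral)
    finally show ?thesis
      using r2_le_6_sqrt[OF that] pos by (simp add: divide_right_mono)
  qed
  thus "\<forall>\<^sub>F n in sequentially. norm (real (r2 n) / (real n)\<^sup>2) \<le> 6 * real n powr (-3/2)"
    by (simp add: eventually_sequentially) blast
qed

lemma summable_on_of_r2_bound:
  fixes f :: "nat \<Rightarrow> real"
  assumes "\<forall>\<^sub>F n in sequentially. \<bar>f n\<bar> \<le> c * (real (r2 n) / (real n)\<^sup>2)"
  shows "f summable_on A"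
proof -
  have "summable (\<lambda>n. norm (f n))"
    by (rule summable_comparison_test_ev[OF _ summable_mult[OF summable_r2_div_square]])
      (use assms in simp)
  hence "f summable_on UNIV" by (rule norm_summable_imp_summable_on)
  thus ?thesis by (rule summable_on_subset_banach) simp
qed

definition secular_term :: "nat \<Rightarrow> real \<Rightarrow> real" where
  "secular_term n x = real (r2 n) * (1 / (real n - x) - real n / ((real n)\<^sup>2 + 1))"

definition secular_dq :: "nat \<Rightarrow> real \<Rightarrow> real \<Rightarrow> real" where
  "secular_dq n x y = real (r2 n) / ((real n - x) * (real n - y))"

lemma secular_term_diff:
  "real n \<noteq> x \<Longrightarrow> real n \<noteq> y \<Longrightarrow> secular_term n y - secular_term n x = (y - x) * secular_dq n x y"
  unfolding secular_term_def secular_dq_def by (simp add: field_simps)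

lemma eventually_real_ge: "\<forall>\<^sub>F n in sequentially. K \<le> real n"
  by real_asymp

lemma summable_on_secular_dq: "(\<lambda>n. secular_dq n x y) summable_on A"
proof (rule summable_on_of_r2_bound[where c = 4])
  show "\<forall>\<^sub>F n in sequentially. \<bar>secular_dq n x y\<bar> \<le> 4 * (real (r2 n) / (real n)\<^sup>2)"
    using eventually_real_ge[of "2 * (\<bar>x\<bar> + \<bar>y\<bar>) + 2"]
  proof eventually_elim
    case (elim n)
    have "real n / 2 * (real n / 2) \<le> (real n - x) * (real n - y)"
      by (rule mult_mono) (use elim in auto)
    hence den: "(real n)\<^sup>2 / 4 \<le> (real n - x) * (real n - y)" by (simp add: power2_eq_square)
    have quarter_pos: "(real n)\<^sup>2 / 4 > 0" using elim by simp
    hence prod_pos: "(real n - x) * (real n - y) > 0" using den by linarith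
    hence "\<bar>secular_dq n x y\<bar> = real (r2 n) / ((real n - x) * (real n - y))"
      unfolding secular_dq_def by (simp add: abs_divide)
    also have "\<dots> \<le> real (r2 n) / ((real n)\<^sup>2 / 4)"
      using den quarter_pos prod_pos by (intro divide_left_mono) auto
    finally show ?case by (simp add: mult.commute)
  qed
qed

lemma summable_on_r2_div_square_shift: "(\<lambda>n. real (r2 n) / (real n - x)\<^sup>2) summable_on A"
  using summable_on_secular_dq[of x x A] by (simp add: secular_dq_def power2_eq_square)

lemma summable_on_secular_term: "(\<lambda>n. secular_term n x) summable_on A"
proof (rule summable_on_of_r2_bound[where c = "2 * (1 + \<bar>x\<bar>)"])
  show "\<forall>\<^sub>F n in sequentially. \<bar>secular_term n x\<bar> \<le> 2 * (1 + \<bar>x\<bar>) * (real (r2 n) / (real n)\<^sup>2)"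
    using eventually_real_ge[of "2 * \<bar>x\<bar> + 2"]
  proof eventually_elim
    case (elim n)
    have n: "real n \<ge> 1" "real n - x \<ge> real n / 2" using elim by auto
    have num: "\<bar>1 + real n * x\<bar> \<le> real n * (1 + \<bar>x\<bar>)"
      using n(1) abs_triangle_ineq[of 1 "real n * x"] by (simp add: abs_mult algebra_simps)
    have den: "real n / 2 * (real n)\<^sup>2 \<le> (real n - x) * ((real n)\<^sup>2 + 1)"
      by (rule mult_mono) (use n in auto)
    have den_pos: "(real n - x) * ((real n)\<^sup>2 + 1) > 0" using n by (simp add: add_pos_nonneg)
    have "secular_term n x = real (r2 n) * ((1 + real n * x) / ((real n - x) * ((real n)\<^sup>2 + 1)))"
    proof -
      have "real n - x \<noteq> 0" "(real n)\<^sup>2 + 1 \<noteq> 0" using n by (auto simp: add_pos_nonneg) (smt (verit) zero_le_power2)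
      thus ?thesis unfolding secular_term_def by (simp add: field_simps power2_eq_square)
    qed
    hence "\<bar>secular_term n x\<bar> = real (r2 n) * (\<bar>1 + real n * x\<bar> / ((real n - x) * ((real n)\<^sup>2 + 1)))"
      using den_pos n by (simp add: abs_mult abs_divide)
    also have "\<dots> \<le> real (r2 n) * (real n * (1 + \<bar>x\<bar>) / (real n / 2 * (real n)\<^sup>2))"
      by (intro mult_left_mono frac_le num den) (use n in auto)
    also have "\<dots> = 2 * (1 + \<bar>x\<bar>) * (real (r2 n) / (real n)\<^sup>2)"
      using n by (simp add: field_simps power2_eq_square)
    finally show ?case .
  qed
qed

definition secular :: "nat set \<Rightarrow> real \<Rightarrow> real" where
  "secular S x = (\<Sum>\<^sub>\<infinity>n\<in>S. secular_term n x)"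

definition secular_off :: "nat set \<Rightarrow> nat \<Rightarrow> real \<Rightarrow> real" where
  "secular_off S m x = (\<Sum>\<^sub>\<infinity>n\<in>S - {m}. secular_term n x)"

definition slope_off :: "nat set \<Rightarrow> nat \<Rightarrow> real \<Rightarrow> real \<Rightarrow> real" where
  "slope_off S m x y = (\<Sum>\<^sub>\<infinity>n\<in>S - {m}. secular_dq n x y)"

definition Hsum_off :: "nat set \<Rightarrow> nat \<Rightarrow> real \<Rightarrow> real" where
  "Hsum_off S m x = (\<Sum>\<^sub>\<infinity>n\<in>S - {m}. real (r2 n) / (real n - x)\<^sup>2)"

lemma secular_eq_term_plus_off: "m \<in> S \<Longrightarrow> secular S x = secular_term m x + secular_off S m x"
proof -
  assume "m \<in> S"
  hence "secular S x = (\<Sum>\<^sub>\<infinity>n\<in>insert m (S - {m}). secular_term n x)"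
    unfolding secular_def by (simp add: insert_absorb)
  also have "\<dots> = secular_term m x + secular_off S m x"
    unfolding secular_off_def by (rule infsum_insert) (auto intro: summable_on_secular_term)
  finally show ?thesis .
qed

lemma secular_off_diff:
  assumes "\<bar>x - real m\<bar> < 1" "\<bar>y - real m\<bar> < 1"
  shows "secular_off S m y - secular_off S m x = (y - x) * slope_off S m x y"
proof -
  have off_pole: "real n \<noteq> x" "real n \<noteq> y" if "n \<in> S - {m}" for n
  proof -
    have "\<bar>real n - real m\<bar> \<ge> 1" using that by (cases "n < m") auto
    thus "real n \<noteq> x" "real n \<noteq> y" using assms by auto
  qed
  have "secular_off S m y - secular_off S m x = (\<Sum>\<^sub>\<infinity>n\<in>S - {m}. secular_term n y + - secular_term n x)"
    unfolding secular_off_def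
    by (subst infsum_add) (auto intro: summable_on_secular_term simp: summable_on_uminus infsum_uminus)
  also have "\<dots> = (\<Sum>\<^sub>\<infinity>n\<in>S - {m}. (y - x) * secular_dq n x y)"
    by (rule infsum_cong) (use secular_term_diff off_pole in auto)
  also have "\<dots> = (y - x) * slope_off S m x y"
    unfolding slope_off_def by (rule infsum_cmult_right) (rule summable_on_secular_dq)
  finally show ?thesis .
qed

lemma product_near_square:
  fixes d p q g :: real
  assumes d: "\<bar>d\<bar> \<ge> 1" and pq: "\<bar>p\<bar> \<le> g" "\<bar>q\<bar> \<le> g" and g: "0 < g" "g \<le> 1/2"
  shows "(\<bar>d\<bar> - g)\<^sup>2 \<le> (d - p) * (d - q)"
    and "d\<^sup>2 / 4 \<le> (d - p) * (d - q)"
    and "((1 - g) / (1 + g))\<^sup>2 * ((d - p) * (d - q)) \<le> (\<bar>d\<bar> - g)\<^sup>2"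
proof -
  have "(\<bar>d\<bar> - g) * (\<bar>d\<bar> - g) \<le> \<bar>d - p\<bar> * \<bar>d - q\<bar>"
    by (rule mult_mono) (use assms in auto)
  moreover have "\<bar>d - p\<bar> * \<bar>d - q\<bar> = (d - p) * (d - q)"
    using assms by (cases "d \<ge> 0") (auto simp: abs_mult algebra_simps)
  ultimately show lower: "(\<bar>d\<bar> - g)\<^sup>2 \<le> (d - p) * (d - q)" by (simp add: power2_eq_square)
  have "(\<bar>d\<bar> / 2)\<^sup>2 \<le> (\<bar>d\<bar> - g)\<^sup>2" by (rule power_mono) (use d g in auto)
  thus "d\<^sup>2 / 4 \<le> (d - p) * (d - q)" using lower by (simp add: power_divide)
  have "(d - p) * (d - q) \<le> \<bar>d - p\<bar> * \<bar>d - q\<bar>" by (metis abs_ge_self abs_mult)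
  also have "\<dots> \<le> (\<bar>d\<bar> + g) * (\<bar>d\<bar> + g)" by (rule mult_mono) (use assms in auto)
  finally have upper: "(d - p) * (d - q) \<le> (\<bar>d\<bar> + g)\<^sup>2" by (simp add: power2_eq_square)
  have ratio: "(1 - g) / (1 + g) * (\<bar>d\<bar> + g) \<le> \<bar>d\<bar> - g"
    using d g by (simp add: field_simps)
  have "((1 - g) / (1 + g))\<^sup>2 * ((d - p) * (d - q)) \<le> ((1 - g) / (1 + g))\<^sup>2 * (\<bar>d\<bar> + g)\<^sup>2"
    by (rule mult_left_mono[OF upper]) simp
  also have "\<dots> = ((1 - g) / (1 + g) * (\<bar>d\<bar> + g))\<^sup>2" by (simp only: power_mult_distrib)
  also have "\<dots> \<le> (\<bar>d\<bar> - g)\<^sup>2" by (rule power_mono[OF ratio]) (use g in simp)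
  finally show "((1 - g) / (1 + g))\<^sup>2 * ((d - p) * (d - q)) \<le> (\<bar>d\<bar> - g)\<^sup>2" .
qed

lemma secular_dq_near_pole:
  fixes n m :: nat and x y l g :: real
  assumes "n \<noteq> m" and g: "0 < g" "g \<le> 1/10"
    and near: "\<bar>x - real m\<bar> \<le> g" "\<bar>y - real m\<bar> \<le> g" "\<bar>l - real m\<bar> \<le> g"
  shows "0 \<le> secular_dq n x y"
    and "((1 - g) / (1 + g))\<^sup>2 * (real (r2 n) / (real n - l)\<^sup>2) \<le> secular_dq n x y"
    and "secular_dq n x y \<le> 4 * (real (r2 n) / (real n - real m)\<^sup>2)"
proof -
  define d where "d = real n - real m"
  have d: "\<bar>d\<bar> \<ge> 1" unfolding d_def using \<open>n \<noteq> m\<close> by (cases "n < m") auto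
  have "(real n - x) * (real n - y) = (d - (x - m)) * (d - (y - m))" unfolding d_def by simp
  with product_near_square[OF d _ _ g(1), of "x - m" "y - m"] near g
  have lower: "(\<bar>d\<bar> - g)\<^sup>2 \<le> (real n - x) * (real n - y)"
    and quarter: "d\<^sup>2 / 4 \<le> (real n - x) * (real n - y)"
    and scaled: "((1 - g) / (1 + g))\<^sup>2 * ((real n - x) * (real n - y)) \<le> (\<bar>d\<bar> - g)\<^sup>2"
    by auto
  have gap_pos: "\<bar>d\<bar> - g > 0" using d g by simp
  hence gap_sq_pos: "(\<bar>d\<bar> - g)\<^sup>2 > 0" by simp
  hence prod_pos: "(real n - x) * (real n - y) > 0" using lower by linarith
  show "0 \<le> secular_dq n x y" unfolding secular_dq_def using prod_pos by simp
  have "\<bar>d\<bar> - g \<le> \<bar>real n - l\<bar>" using near(3) unfolding d_def by linarith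
  hence "(\<bar>d\<bar> - g)\<^sup>2 \<le> \<bar>real n - l\<bar>\<^sup>2" by (rule power_mono) (use gap_pos in simp)
  hence l_far: "(\<bar>d\<bar> - g)\<^sup>2 \<le> (real n - l)\<^sup>2" by simp
  hence l_pos: "(real n - l)\<^sup>2 > 0" using gap_sq_pos by linarith
  have div_le: "c / L \<le> 1 / P" if "0 < P" "0 < L" "c * P \<le> L" for c L P :: real
    using that by (simp add: divide_simps mult.commute)
  have "((1 - g) / (1 + g))\<^sup>2 * (real (r2 n) / (real n - l)\<^sup>2)
      = real (r2 n) * (((1 - g) / (1 + g))\<^sup>2 / (real n - l)\<^sup>2)" by simp
  also have "\<dots> \<le> real (r2 n) * (1 / ((real n - x) * (real n - y)))"
    using div_le[OF prod_pos l_pos order_trans[OF scaled l_far]] by (rule mult_left_mono) simp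
  also have "\<dots> = secular_dq n x y" unfolding secular_dq_def by simp
  finally show "((1 - g) / (1 + g))\<^sup>2 * (real (r2 n) / (real n - l)\<^sup>2) \<le> secular_dq n x y" .
  have "d\<^sup>2 / 4 > 0" using d by auto
  hence "secular_dq n x y \<le> real (r2 n) / (d\<^sup>2 / 4)"
    unfolding secular_dq_def using quarter prod_pos by (intro divide_left_mono) auto
  thus "secular_dq n x y \<le> 4 * (real (r2 n) / (real n - real m)\<^sup>2)" by (simp add: d_def mult.commute)
qed

lemma Hsum_off_nonneg: "0 \<le> Hsum_off S m x"
  unfolding Hsum_off_def by (rule infsum_nonneg) simp

text \<open>Since \<open>1 / 0 = 0\<close>, the pole term vanishes at \<open>x = m\<close>: \<open>secular S m\<close> is the regular part at \<open>m\<close>.\<close>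

lemma secular_near_pole:
  assumes "m \<in> S" "\<bar>x - real m\<bar> < 1"
  shows "secular S x = secular S (real m) + real (r2 m) / (real m - x) + (x - real m) * slope_off S m (real m) x"
proof -
  have "secular_off S m x - secular_off S m (real m) = (x - real m) * slope_off S m (real m) x"
    by (rule secular_off_diff) (use assms in auto)
  moreover have "secular_term m x - secular_term m (real m) = real (r2 m) / (real m - x)"
    unfolding secular_term_def by (simp add: algebra_simps)
  ultimately show ?thesis
    using secular_eq_term_plus_off[OF \<open>m \<in> S\<close>, of x] secular_eq_term_plus_off[OF \<open>m \<in> S\<close>, of "real m"]
    by linarith
qed

context
  fixes S :: "nat set" and m :: nat and g :: real
  assumes g: "0 < g" "g \<le> 1/10"
begin

lemma slope_off_nonneg:
  "\<bar>x - real m\<bar> \<le> g \<Longrightarrow> \<bar>y - real m\<bar> \<le> g \<Longrightarrow> 0 \<le> slope_off S m x y"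
  unfolding slope_off_def by (rule infsum_nonneg) (use secular_dq_near_pole(1) g in auto)

lemma slope_off_le_Hsum_off:
  assumes "\<bar>x - real m\<bar> \<le> g" "\<bar>y - real m\<bar> \<le> g"
  shows "slope_off S m x y \<le> 4 * Hsum_off S m (real m)"
proof -
  have "slope_off S m x y \<le> (\<Sum>\<^sub>\<infinity>n\<in>S - {m}. 4 * (real (r2 n) / (real n - real m)\<^sup>2))"
    unfolding slope_off_def
    using summable_on_secular_dq summable_on_cmult_right[OF summable_on_r2_div_square_shift]
      secular_dq_near_pole(3)[OF _ g assms assms(1)] by (intro infsum_mono) auto
  also have "\<dots> = 4 * Hsum_off S m (real m)"
    unfolding Hsum_off_def by (rule infsum_cmult_right) (rule summable_on_r2_div_square_shift)
  finally show ?thesis .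
qed

lemma Hsum_off_le_slope_off:
  assumes "\<bar>x - real m\<bar> \<le> g" "\<bar>y - real m\<bar> \<le> g" "\<bar>l - real m\<bar> \<le> g"
  shows "((1 - g) / (1 + g))\<^sup>2 * Hsum_off S m l \<le> slope_off S m x y"
proof -
  have "((1 - g) / (1 + g))\<^sup>2 * Hsum_off S m l
      = (\<Sum>\<^sub>\<infinity>n\<in>S - {m}. ((1 - g) / (1 + g))\<^sup>2 * (real (r2 n) / (real n - l)\<^sup>2))"
    unfolding Hsum_off_def by (rule infsum_cmult_right[symmetric]) (rule summable_on_r2_div_square_shift)
  also have "\<dots> \<le> slope_off S m x y"
    unfolding slope_off_def
    using summable_on_secular_dq summable_on_cmult_right[OF summable_on_r2_div_square_shift]
      secular_dq_near_pole(2)[OF _ g assms] by (intro infsum_mono) auto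
  finally show ?thesis .
qed

lemma slope_off_ge_neighbour:
  assumes "m + 3 \<in> S" "\<bar>x - real m\<bar> \<le> g" "\<bar>y - real m\<bar> \<le> g"
  shows "real (r2 (m + 3)) / (3 + g)\<^sup>2 \<le> slope_off S m x y"
proof -
  have "(real (m + 3) - x) * (real (m + 3) - y) \<le> (3 + g) * (3 + g)"
    by (rule mult_mono) (use assms g in auto)
  moreover have "0 < (real (m + 3) - x) * (real (m + 3) - y)" using assms g by auto
  ultimately have "real (r2 (m + 3)) / (3 + g)\<^sup>2 \<le> secular_dq (m + 3) x y"
    unfolding secular_dq_def power2_eq_square by (intro divide_left_mono) auto
  also have "\<dots> = (\<Sum>\<^sub>\<infinity>n\<in>{m + 3}. secular_dq n x y)" by simp
  also have "\<dots> \<le> slope_off S m x y"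
    unfolding slope_off_def
    using assms secular_dq_near_pole(1)[OF _ g assms(2,3)]
    by (intro infsum_mono_neutral) (auto intro: summable_on_secular_dq)
  finally show ?thesis .
qed

lemma continuous_on_secular_off: "continuous_on {real m - g .. real m + g} (secular_off S m)"
proof (rule lipschitz_on_continuous_on)
  show "lipschitz_on (4 * Hsum_off S m (real m)) {real m - g .. real m + g} (secular_off S m)"
  proof (rule lipschitz_onI)
    fix x y assume "x \<in> {real m - g .. real m + g}" "y \<in> {real m - g .. real m + g}"
    hence near: "\<bar>x - real m\<bar> \<le> g" "\<bar>y - real m\<bar> \<le> g" by auto
    have "dist (secular_off S m x) (secular_off S m y) = \<bar>secular_off S m y - secular_off S m x\<bar>"
      by (simp add: dist_real_def abs_minus_commute)
    also have "\<dots> = \<bar>y - x\<bar> * slope_off S m x y"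
      using secular_off_diff[of x m y S] near g slope_off_nonneg[OF near] by (simp add: abs_mult)
    also have "\<dots> \<le> \<bar>y - x\<bar> * (4 * Hsum_off S m (real m))"
      by (rule mult_left_mono[OF slope_off_le_Hsum_off[OF near]]) simp
    finally show "dist (secular_off S m x) (secular_off S m y) \<le> 4 * Hsum_off S m (real m) * dist x y"
      by (simp add: dist_real_def abs_minus_commute mult.commute)
  qed (simp add: Hsum_off_nonneg)
qed

end

lemma root_left_of_pole:
  fixes G D :: "real \<Rightarrow> real" and m g r a B :: real
  assumes g: "0 < g" and r: "0 < r"
    and G: "\<And>x. \<bar>x - m\<bar> \<le> g \<Longrightarrow> G x = r / (m - x) + a + (x - m) * D x"
    and D_le: "\<And>x. \<bar>x - m\<bar> \<le> g \<Longrightarrow> D x \<le> B"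
    and D_edge: "r / g + 1/10 \<le> g * D (m - g)"
    and cont: "continuous_on {m - g..<m} G"
    and a: "a \<le> 1/10"
  shows "\<exists>l. m - g \<le> l \<and> l < m \<and> G l = 0 \<and> D l * (m - l)\<^sup>2 \<le> r + (m - l) / 10"
proof -
  \<comment> \<open>Close enough to the pole, the term \<open>r / (m - x)\<close> dominates.\<close>
  define s where "s = min (g / 2) (r / (2 * (\<bar>a\<bar> + g * \<bar>B\<bar> + 1)))"
  have den: "0 < 2 * (\<bar>a\<bar> + g * \<bar>B\<bar> + 1)" using g by (simp add: add_nonneg_pos)
  have "s \<le> g / 2" unfolding s_def by (rule min.cobounded1)
  moreover have "0 < s" unfolding s_def using g r den by simp
  ultimately have s: "0 < s" "s \<le> g / 2" by simp_all
  have "s \<le> r / (2 * (\<bar>a\<bar> + g * \<bar>B\<bar> + 1))" unfolding s_def by simp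
  hence rs: "2 * (\<bar>a\<bar> + g * \<bar>B\<bar> + 1) \<le> r / s" using s den by (simp add: field_simps)
  have "s * D (m - s) \<le> s * \<bar>B\<bar>"
    using D_le[of "m - s"] s g by (intro mult_left_mono) auto
  also have "\<dots> \<le> g * \<bar>B\<bar>" using s g by (intro mult_right_mono) auto
  finally have "s * D (m - s) \<le> g * \<bar>B\<bar>" .
  moreover have "G (m - s) = r / s + a - s * D (m - s)" using G[of "m - s"] s g by simp
  moreover have "0 \<le> g * \<bar>B\<bar>" using g by simp
  ultimately have "0 \<le> G (m - s)" using rs abs_ge_minus_self[of a] by (smt (verit))
  moreover have "G (m - g) \<le> 0" using G[of "m - g"] g D_edge a by simp
  moreover have "continuous_on {m - g .. m - s} G"
    by (rule continuous_on_subset[OF cont]) (use s in auto)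
  ultimately obtain l where l: "m - g \<le> l" "l \<le> m - s" "G l = 0"
    using IVT'[of G "m - g" 0 "m - s"] s g by auto
  define u where "u = m - l"
  have u: "0 < u" "u \<le> g" using l s unfolding u_def by auto
  have "0 = r / u + a - u * D l" using G[of l] l(3) u unfolding u_def by (simp add: algebra_simps)
  hence "D l * u\<^sup>2 = r + a * u" using u by (simp add: field_simps power2_eq_square)
  moreover have "a * u \<le> u / 10" using a u by (simp add: mult_right_mono)
  ultimately show ?thesis using l s unfolding u_def by (intro exI[of _ l]) auto
qed

lemma root_right_of_pole:
  fixes G D :: "real \<Rightarrow> real" and m g r a B :: real
  assumes g: "0 < g" and r: "0 < r"
    and G: "\<And>x. \<bar>x - m\<bar> \<le> g \<Longrightarrow> G x = r / (m - x) + a + (x - m) * D x"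
    and D_le: "\<And>x. \<bar>x - m\<bar> \<le> g \<Longrightarrow> D x \<le> B"
    and D_edge: "r / g + 1/10 \<le> g * D (m + g)"
    and cont: "continuous_on {m<..m + g} G"
    and a: "-1/10 \<le> a"
  shows "\<exists>l. m < l \<and> l \<le> m + g \<and> G l = 0 \<and> D l * (l - m)\<^sup>2 \<le> r + (l - m) / 10"
proof -
  \<comment> \<open>Reflect at the pole: \<open>x \<mapsto> - G (2 m - x)\<close> has the same shape, with \<open>a\<close> replaced by \<open>- a\<close>.\<close>
  define refl where "refl x = 2 * m - x" for x
  have "\<exists>l. m - g \<le> l \<and> l < m \<and> - G (refl l) = 0 \<and> D (refl l) * (m - l)\<^sup>2 \<le> r + (m - l) / 10"
  proof (rule root_left_of_pole[OF g r, where a = "- a" and B = B])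
    fix x assume x: "\<bar>x - m\<bar> \<le> g"
    hence near: "\<bar>refl x - m\<bar> \<le> g" unfolding refl_def by simp
    have "m - refl x = - (m - x)" unfolding refl_def by simp
    hence "r / (m - refl x) = - (r / (m - x))" by (simp only: divide_minus_right)
    thus "- G (refl x) = r / (m - x) + - a + (x - m) * D (refl x)"
      using G[OF near] unfolding refl_def by (simp add: algebra_simps)
    show "D (refl x) \<le> B" by (rule D_le[OF near])
  next
    show "r / g + 1/10 \<le> g * D (refl (m - g))" using D_edge unfolding refl_def by simp
    have "continuous_on {m - g..<m} (G \<circ> refl)"
      by (rule continuous_on_compose[OF _ continuous_on_subset[OF cont]])
        (auto simp: refl_def intro!: continuous_intros)
    thus "continuous_on {m - g..<m} (\<lambda>x. - G (refl x))"
      by (intro continuous_intros) (simp add: comp_def)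
  qed (use a in simp)
  then obtain l where l: "m - g \<le> l" "l < m" "G (refl l) = 0" "D (refl l) * (m - l)\<^sup>2 \<le> r + (m - l) / 10"
    by auto
  have "refl l - m = m - l" unfolding refl_def by simp
  thus ?thesis using l by (intro exI[of _ "refl l"]) (auto simp: refl_def)
qed

lemma le_one_plus_6_mult_div_square:
  fixes g r u D H :: real
  assumes g: "0 < g" "g \<le> 1/10" and r: "1 \<le> r" and u: "0 < u" "u \<le> g"
    and D: "D * u\<^sup>2 \<le> r + u / 10" and H: "((1 - g) / (1 + g))\<^sup>2 * H \<le> D"
  shows "H \<le> (1 + 6 * g) * r / u\<^sup>2"
proof -
  define c where "c = ((1 - g) / (1 + g))\<^sup>2"
  have c_pos: "c > 0" unfolding c_def using g by simp
  have "c * H * u\<^sup>2 \<le> D * u\<^sup>2" using H u unfolding c_def by (simp add: mult_right_mono)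
  also have "\<dots> \<le> r + u / 10" by (rule D)
  also have "\<dots> \<le> r * (1 + g / 10)"
  proof -
    have "u \<le> g * r" using mult_left_mono[OF r, of g] g u by linarith
    thus ?thesis by (simp add: algebra_simps)
  qed
  also have "\<dots> \<le> c * ((1 + 6 * g) * r)"
  proof -
    \<comment> \<open>\<open>(1 + g/10) (1 + g)^2 \<le> (1 + 6g) (1 - g)^2\<close> for \<open>g \<le> 1/10\<close>: this is where the constant 6 comes from.\<close>
    have "(1 + 6 * g) * (1 - g)\<^sup>2 - (1 + g / 10) * (1 + g)\<^sup>2 = g * ((19/10 - 122/10 * g) + 59/10 * g\<^sup>2)"
      by (simp add: power2_eq_square algebra_simps)
    also have "\<dots> \<ge> 0" using g by (intro mult_nonneg_nonneg add_nonneg_nonneg) auto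
    finally have "1 + g / 10 \<le> (1 + 6 * g) * c"
      using g unfolding c_def by (simp add: power_divide field_simps)
    thus ?thesis using r by (simp add: mult_left_mono mult_ac)
  qed
  finally have "H * u\<^sup>2 \<le> (1 + 6 * g) * r" using c_pos by (simp add: mult.assoc)
  thus ?thesis using u by (simp add: field_simps)
qed

lemma continuous_on_secular:
  assumes "m \<in> S" "0 < g" "g \<le> 1/10"
  shows "continuous_on ({real m - g .. real m + g} - {real m}) (secular S)"
proof -
  have "continuous_on ({real m - g .. real m + g} - {real m}) (\<lambda>x. secular_term m x + secular_off S m x)"
    unfolding secular_term_def
    by (intro continuous_intros continuous_on_subset[OF continuous_on_secular_off[OF assms(2,3)]]) auto
  thus ?thesis using secular_eq_term_plus_off[OF assms(1)] by simp
qed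

context
  fixes S :: "nat set" and m :: nat and g C :: real
  assumes g: "0 < g" "g \<le> 1/10" and m_in: "m \<in> S" "m + 3 \<in> S"
    and r2_pos: "1 \<le> real (r2 m)" and r2_next: "10 * real (r2 m) / g\<^sup>2 \<le> real (r2 (m + 3))"
begin

lemma slope_off_large:
  assumes x: "\<bar>x - real m\<bar> \<le> g"
  shows "real (r2 m) / g + 1/10 \<le> g * slope_off S m (real m) x"
proof -
  let ?r = "real (r2 m)"
  have "(3 + g) * (3 + g) \<le> (31/10) * (31/10)" by (rule mult_mono) (use g in auto)
  hence "10 * ?r / g\<^sup>2 / (961/100) \<le> real (r2 (m + 3)) / (3 + g)\<^sup>2"
    using r2_next g by (intro frac_le) (auto simp: power2_eq_square)
  also have "\<dots> \<le> slope_off S m (real m) x"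
    by (rule slope_off_ge_neighbour[OF g m_in(2)]) (use x g in auto)
  finally have "g * (1000 * ?r / (961 * g\<^sup>2)) \<le> g * slope_off S m (real m) x"
    using g by (intro mult_left_mono) auto
  moreover have "?r / g + 1/10 \<le> g * (1000 * ?r / (961 * g\<^sup>2))"
  proof -
    have "10 \<le> ?r / g" using r2_pos g by (simp add: field_simps)
    thus ?thesis using g by (simp add: field_simps power2_eq_square)
  qed
  ultimately show ?thesis by linarith
qed

lemma secular_root_left:
  assumes "secular S (real m) - C \<le> 1/10"
  shows "\<exists>l. real m - g \<le> l \<and> l < real m \<and> secular S l = C
           \<and> Hsum_off S m l \<le> (1 + 6 * g) * real (r2 m) / (real m - l)\<^sup>2"
proof -
  have "\<exists>l. real m - g \<le> l \<and> l < real m \<and> secular S l - C = 0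
          \<and> slope_off S m (real m) l * (real m - l)\<^sup>2 \<le> real (r2 m) + (real m - l) / 10"
  proof (rule root_left_of_pole[where B = "4 * Hsum_off S m (real m)"])
    fix x assume x: "\<bar>x - real m\<bar> \<le> g"
    show "secular S x - C = real (r2 m) / (real m - x) + (secular S (real m) - C)
        + (x - real m) * slope_off S m (real m) x"
      using secular_near_pole[OF m_in(1), of x] x g by simp
    show "slope_off S m (real m) x \<le> 4 * Hsum_off S m (real m)"
      by (rule slope_off_le_Hsum_off[OF g]) (use x g in auto)
  next
    show "real (r2 m) / g + 1/10 \<le> g * slope_off S m (real m) (real m - g)"
      by (rule slope_off_large) (use g in simp)
    show "continuous_on {real m - g..<real m} (\<lambda>x. secular S x - C)"
      by (intro continuous_intros continuous_on_subset[OF continuous_on_secular[OF m_in(1) g]]) auto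
  qed (use g r2_pos assms in auto)
  then obtain l where l: "real m - g \<le> l" "l < real m" "secular S l = C"
    and slope: "slope_off S m (real m) l * (real m - l)\<^sup>2 \<le> real (r2 m) + (real m - l) / 10" by auto
  have "Hsum_off S m l \<le> (1 + 6 * g) * real (r2 m) / (real m - l)\<^sup>2"
    by (rule le_one_plus_6_mult_div_square[OF g r2_pos _ _ slope Hsum_off_le_slope_off[OF g]])
      (use l in auto)
  thus ?thesis using l by blast
qed

lemma secular_root_right:
  assumes "-1/10 \<le> secular S (real m) - C"
  shows "\<exists>l. real m < l \<and> l \<le> real m + g \<and> secular S l = C
           \<and> Hsum_off S m l \<le> (1 + 6 * g) * real (r2 m) / (real m - l)\<^sup>2"
proof -
  have "\<exists>l. real m < l \<and> l \<le> real m + g \<and> secular S l - C = 0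
          \<and> slope_off S m (real m) l * (l - real m)\<^sup>2 \<le> real (r2 m) + (l - real m) / 10"
  proof (rule root_right_of_pole[where B = "4 * Hsum_off S m (real m)"])
    fix x assume x: "\<bar>x - real m\<bar> \<le> g"
    show "secular S x - C = real (r2 m) / (real m - x) + (secular S (real m) - C)
        + (x - real m) * slope_off S m (real m) x"
      using secular_near_pole[OF m_in(1), of x] x g by simp
    show "slope_off S m (real m) x \<le> 4 * Hsum_off S m (real m)"
      by (rule slope_off_le_Hsum_off[OF g]) (use x g in auto)
  next
    show "real (r2 m) / g + 1/10 \<le> g * slope_off S m (real m) (real m + g)"
      by (rule slope_off_large) (use g in simp)
    show "continuous_on {real m<..real m + g} (\<lambda>x. secular S x - C)"
      by (intro continuous_intros continuous_on_subset[OF continuous_on_secular[OF m_in(1) g]]) auto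
  qed (use g r2_pos assms in auto)
  then obtain l where l: "real m < l" "l \<le> real m + g" "secular S l = C"
    and slope: "slope_off S m (real m) l * (l - real m)\<^sup>2 \<le> real (r2 m) + (l - real m) / 10" by auto
  have "Hsum_off S m l \<le> (1 + 6 * g) * real (r2 m) / (l - real m)\<^sup>2"
    by (rule le_one_plus_6_mult_div_square[OF g r2_pos _ _ slope Hsum_off_le_slope_off[OF g]])
      (use l in auto)
  thus ?thesis using l by (metis power2_commute)
qed

end

lemma card_annulus_le:
  fixes a :: real and m :: nat
  defines "E \<equiv> {n::nat. a \<le> \<bar>real n - real m\<bar> \<and> \<bar>real n - real m\<bar> < a + 9}"
  shows "finite E" and "card E \<le> 18"
proof -
  define j where "j = \<lceil>a\<rceil>"
  define K where "K = {j..j + 8} \<union> {-(j + 8)..-j}"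
  have E_sub: "E \<subseteq> (\<lambda>k. nat (int m + k)) ` K"
  proof
    fix n assume "n \<in> E"
    hence n: "a \<le> \<bar>real n - real m\<bar>" "\<bar>real n - real m\<bar> < a + 9" unfolding E_def by auto
    define k where "k = int n - int m"
    have k_eq: "real_of_int \<bar>k\<bar> = \<bar>real n - real m\<bar>" unfolding k_def by simp
    have "j \<le> \<bar>k\<bar>" unfolding j_def using n(1) k_eq by (simp add: ceiling_le_iff)
    moreover have "\<bar>k\<bar> \<le> j + 8" using n(2) k_eq le_of_int_ceiling[of a] unfolding j_def by linarith
    ultimately have "k \<in> K" unfolding K_def by (cases "k \<ge> 0") auto
    moreover have "n = nat (int m + k)" unfolding k_def by simp
    ultimately show "n \<in> (\<lambda>k. nat (int m + k)) ` K" by blast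
  qed
  have K: "finite K" "card K \<le> 18"
    using card_Un_le[of "{j..j + 8}" "{-(j + 8)..-j}"] unfolding K_def by simp_all
  show "finite E" by (rule finite_subset[OF E_sub]) (use K(1) in simp)
  have "card E \<le> card K"
    using card_mono[OF finite_imageI[OF K(1)] E_sub] card_image_le[OF K(1), of "\<lambda>k. nat (int m + k)"]
    by linarith
  thus "card E \<le> 18" using K(2) by linarith
qed

lemma powr_le_powr_plus_diff:
  fixes x y eta :: real
  assumes "0 < eta" "eta \<le> 1" "1 \<le> x" "x \<le> y"
  shows "y powr eta \<le> x powr eta + (y - x)"
proof -
  define q where "q = y / x"
  have q: "1 \<le> q" "y = x * q" unfolding q_def using assms by auto
  have "y powr eta = x powr eta * q powr eta" using q assms by (simp add: powr_mult)
  also have "\<dots> \<le> x powr eta * q"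
    using powr_mono[of eta 1 q] q assms by (simp add: mult_left_mono)
  also have "\<dots> = x powr eta + (y - x) * (x powr eta / x)"
    unfolding q_def using assms by (simp add: field_simps)
  also have "\<dots> \<le> x powr eta + (y - x) * 1"
  proof -
    have "x powr eta \<le> x" using powr_mono[of eta 1 x] assms by simp
    hence "x powr eta / x \<le> 1" using assms by simp
    thus ?thesis by (intro add_left_mono mult_left_mono) (use assms in auto)
  qed
  finally show ?thesis by simp
qed

lemma secular_term_in_annulus:
  fixes t :: real and m n :: nat
  assumes t: "12 \<le> t" "t + 12 \<le> real m / 2"
    and n: "t - 3 \<le> \<bar>real n - real m\<bar>" "\<bar>real n - real m\<bar> < t + 6"
  shows "\<bar>secular_term n (real m)\<bar> \<le> 36 * sqrt (real m) / t"
proof -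
  have dist: "t / 2 \<le> \<bar>real n - real m\<bar>" using n(1) t by linarith
  have n_bounds: "real m / 2 \<le> real n" "real n \<le> 2 * real m" using n(2) t by linarith+
  have m_pos: "0 < real m" "t \<le> real m" using t by linarith+
  hence n_pos: "0 < real n" using n_bounds by linarith
  have "1 / \<bar>real n - real m\<bar> \<le> 2 / t"
    using frac_le[of 1 1 "t / 2" "\<bar>real n - real m\<bar>"] dist t by simp
  moreover have "real n / ((real n)\<^sup>2 + 1) \<le> 2 / t"
  proof -
    have "real n / ((real n)\<^sup>2 + 1) \<le> real n / (real n)\<^sup>2"
      using n_pos by (intro divide_left_mono mult_pos_pos) (simp_all, smt (verit) zero_le_power2)
    also have "\<dots> = 1 / real n" using n_pos by (simp add: power2_eq_square)
    also have "\<dots> \<le> 2 / t" using n_bounds m_pos t by (simp add: field_simps)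
    finally show ?thesis .
  qed
  ultimately have factor: "\<bar>1 / (real n - real m) - real n / ((real n)\<^sup>2 + 1)\<bar> \<le> 4 / t"
    using abs_triangle_ineq4[of "1 / (real n - real m)" "real n / ((real n)\<^sup>2 + 1)"] n_pos
    by (simp add: abs_divide)
  have "real (r2 n) \<le> 6 * sqrt (2 * real m)"
  proof -
    have "sqrt (real n) \<le> sqrt (2 * real m)" using n_bounds(2) by simp
    moreover have "real (r2 n) \<le> 6 * sqrt (real n)" by (rule r2_le_6_sqrt) (use n_pos in simp)
    ultimately show ?thesis by linarith
  qed
  also have "\<dots> \<le> 9 * sqrt (real m)"
  proof -
    have "sqrt 2 \<le> 3/2" by (rule real_le_lsqrt) (auto simp: power2_eq_square)
    hence "6 * sqrt 2 * sqrt (real m) \<le> 9 * sqrt (real m)" by (intro mult_right_mono) auto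
    thus ?thesis by (simp add: real_sqrt_mult)
  qed
  finally have "\<bar>secular_term n (real m)\<bar> \<le> 9 * sqrt (real m) * (4 / t)"
    unfolding secular_term_def abs_mult using factor by (intro mult_mono) auto
  thus ?thesis by simp
qed

lemma abs_sum_diff_le_sum_sym_diff:
  fixes f :: "'a \<Rightarrow> real"
  assumes "finite A" "finite B"
  shows "\<bar>sum f A - sum f B\<bar> \<le> sum (\<lambda>n. \<bar>f n\<bar>) ((A - B) \<union> (B - A))"
proof -
  have "sum f A - sum f B = sum f (A - B) - sum f (B - A)"
    using sum.Int_Diff[OF assms(1), of f B] sum.Int_Diff[OF assms(2), of f A] by (simp add: Int_commute)
  also have "\<bar>\<dots>\<bar> \<le> \<bar>sum f (A - B)\<bar> + \<bar>sum f (B - A)\<bar>" by (rule abs_triangle_ineq4)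
  also have "\<dots> \<le> sum (\<lambda>n. \<bar>f n\<bar>) (A - B) + sum (\<lambda>n. \<bar>f n\<bar>) (B - A)"
    by (intro add_mono sum_abs)
  also have "\<dots> = sum (\<lambda>n. \<bar>f n\<bar>) ((A - B) \<union> (B - A))"
    by (rule sum.union_disjoint[symmetric]) (use assms in auto)
  finally show ?thesis .
qed

lemma secular_window_shift:
  fixes m m' :: nat and eta :: real
  defines "t \<equiv> real m powr eta" and "t' \<equiv> real m' powr eta"
  assumes eta: "0 < eta" "eta \<le> 1"
    and t: "12 \<le> t" "t + 12 \<le> real m / 2" "3300 * sqrt (real m) \<le> t"
    and m': "m < m'" "m' \<le> m + 3"
  shows "\<bar>secular {n \<in> N2. \<bar>real n - real m\<bar> < t} (real m)
          - secular {n \<in> N2. \<bar>real n - real m'\<bar> < t'} (real m)\<bar> \<le> 1/5"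
proof -
  define A where "A = {n \<in> N2. \<bar>real n - real m\<bar> < t}"
  define B where "B = {n \<in> N2. \<bar>real n - real m'\<bar> < t'}"
  define E where "E = {n::nat. t - 3 \<le> \<bar>real n - real m\<bar> \<and> \<bar>real n - real m\<bar> < t - 3 + 9}"
  have "t \<le> t'" unfolding t_def t'_def using eta m' by (intro powr_mono2) auto
  moreover have "t' \<le> t + 3"
    using powr_le_powr_plus_diff[OF eta, of "real m" "real m'"] t m' unfolding t_def t'_def by simp
  ultimately have sym_diff: "(A - B) \<union> (B - A) \<subseteq> E"
    unfolding A_def B_def E_def using m' by auto
  have "A \<subseteq> {..2 * m}" unfolding A_def using t by auto
  hence fin_A: "finite A" by (rule finite_subset) simp
  have "B \<subseteq> A \<union> E" using sym_diff by blast
  hence fin_B: "finite B" using fin_A card_annulus_le(1)[of "t - 3" m] unfolding E_def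
    by (auto intro: finite_subset)
  have "\<bar>secular A (real m) - secular B (real m)\<bar>
      \<le> sum (\<lambda>n. \<bar>secular_term n (real m)\<bar>) ((A - B) \<union> (B - A))"
    unfolding secular_def using abs_sum_diff_le_sum_sym_diff[OF fin_A fin_B] fin_A fin_B by simp
  also have "\<dots> \<le> sum (\<lambda>n. \<bar>secular_term n (real m)\<bar>) E"
    using card_annulus_le(1)[of "t - 3" m] sym_diff unfolding E_def by (intro sum_mono2) auto
  also have "\<dots> \<le> of_nat (card E) * (36 * sqrt (real m) / t)"
    by (rule sum_bounded_above) (rule secular_term_in_annulus[OF t(1,2)], auto simp: E_def)
  also have "\<dots> \<le> 18 * (36 * sqrt (real m) / t)"
    using card_annulus_le(2)[of "t - 3" m] t by (intro mult_right_mono) (auto simp: E_def)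
  also have "\<dots> \<le> 1/5" using t real_sqrt_ge_zero[of "real m"] by (simp add: field_simps)
  finally show ?thesis unfolding A_def B_def .
qed

definition window_large :: "real \<Rightarrow> nat \<Rightarrow> bool" where
  "window_large eta m \<longleftrightarrow> 12 \<le> real m powr eta \<and> real m powr eta + 12 \<le> real m / 2
     \<and> 3300 * sqrt (real m) \<le> real m powr eta"

lemma eventually_window_large:
  "1/2 < eta \<Longrightarrow> eta < 1 \<Longrightarrow> \<forall>\<^sub>F m in sequentially. window_large eta m"
  unfolding window_large_def by (intro eventually_conj) real_asymp+

lemma nplus_left_of: "m \<in> N2 \<Longrightarrow> real m - 1 < l \<Longrightarrow> l < real m \<Longrightarrow> nplus l = m"
  unfolding nplus_def by (rule Least_equality) linarith+

lemma nplus_right_of: "real m < l \<Longrightarrow> l < real m + 1 \<Longrightarrow> nplus l = nplus (real m + 1/2)"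
proof -
  assume "real m < l" "l < real m + 1"
  hence "(l < real n) = (m + 1 \<le> n)" and "(real m + 1/2 < real n) = (m + 1 \<le> n)" for n :: nat
    by linarith+
  thus ?thesis unfolding nplus_def by simp
qed

lemma nplus_right_bounds:
  assumes "m + k \<in> N2" "0 < k"
  shows "m < nplus (real m + 1/2)" and "nplus (real m + 1/2) \<le> m + k"
proof -
  have ex: "m + k \<in> N2 \<and> real m + 1/2 < real (m + k)" using assms by auto
  show "m < nplus (real m + 1/2)"
    using LeastI[where P = "\<lambda>n. n \<in> N2 \<and> real m + 1/2 < real n", OF ex] unfolding nplus_def by linarith
  show "nplus (real m + 1/2) \<le> m + k"
    unfolding nplus_def by (rule Least_le[where P = "\<lambda>n. n \<in> N2 \<and> real m + 1/2 < real n", OF ex])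
qed

lemma Iset_cong_nplus: "nplus l = nplus l' \<Longrightarrow> Iset cpl eta l = Iset cpl eta l'"
  unfolding Iset_def by (cases cpl) simp_all

lemma mem_NewEig_iff: "l \<in> NewEig cpl eta C \<longleftrightarrow> l \<notin> real ` N2 \<and> secular (Iset cpl eta l) l = C"
  unfolding NewEig_def secular_def secular_term_def by simp

lemma Hderiv_eq_Hsum_off: "Hderiv cpl eta m l = Hsum_off (Iset cpl eta l) m l"
  unfolding Hderiv_def Hsum_off_def by simp

lemma not_of_nat_between: "real k < l \<Longrightarrow> l < real k + 1 \<Longrightarrow> l \<notin> real ` A"
  by (auto simp del: of_nat_add simp add: of_nat_less_iff[symmetric])

lemma secular_windows_at_pole:
  fixes cpl :: coupling and eta :: real and m :: nat
  defines "SL \<equiv> Iset cpl eta (real m - 1/2)" and "SR \<equiv> Iset cpl eta (real m + 1/2)"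
  assumes m: "m \<in> N2" "m + 3 \<in> N2"
    and strong: "cpl = Strong \<Longrightarrow> 1/2 < eta \<and> eta < 1 \<and> window_large eta m"
  shows "m \<in> SL \<and> m + 3 \<in> SL \<and> m \<in> SR \<and> m + 3 \<in> SR
    \<and> \<bar>secular SL (real m) - secular SR (real m)\<bar> \<le> 1/5"
proof (cases cpl)
  case Weak
  thus ?thesis unfolding SL_def SR_def Iset_def using m by simp
next
  case Strong
  define m' where "m' = nplus (real m + 1/2)"
  define t where "t = real m powr eta"
  have eta: "1/2 < eta" "eta < 1" and t: "12 \<le> t" "t + 12 \<le> real m / 2" "3300 * sqrt (real m) \<le> t"
    using strong[OF Strong] unfolding window_large_def t_def by auto
  have m': "m < m'" "m' \<le> m + 3" using nplus_right_bounds[OF m(2)] unfolding m'_def by auto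
  have "t \<le> real m' powr eta" unfolding t_def by (rule powr_mono2) (use eta m' in auto)
  moreover have "SL = {n \<in> N2. \<bar>real n - real m\<bar> < t}"
    unfolding SL_def Iset_def t_def using Strong nplus_left_of[OF m(1)] by simp
  moreover have "SR = {n \<in> N2. \<bar>real n - real m'\<bar> < real m' powr eta}"
    unfolding SR_def Iset_def m'_def using Strong by simp
  moreover have "\<bar>secular {n \<in> N2. \<bar>real n - real m\<bar> < t} (real m)
      - secular {n \<in> N2. \<bar>real n - real m'\<bar> < real m' powr eta} (real m)\<bar> \<le> 1/5"
    unfolding t_def by (rule secular_window_shift) (use eta t m' in \<open>auto simp: t_def\<close>)
  ultimately show ?thesis using m m' t by auto
qed

lemma new_eigenvalue_near_pole:
  fixes cpl :: coupling and eta C g :: real and m :: nat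
  assumes g: "0 < g" "g \<le> 1/10" and m: "m \<in> N2" "1 \<le> m"
    and r2_next: "10 * real (r2 m) / g\<^sup>2 \<le> real (r2 (m + 3))"
    and strong: "cpl = Strong \<Longrightarrow> 1/2 < eta \<and> eta < 1 \<and> window_large eta m"
  shows "\<exists>lam \<in> NewEig cpl eta C. \<bar>lam - real m\<bar> \<le> g
           \<and> Hderiv cpl eta m lam \<le> (1 + 6 * g) * real (r2 m) / (real m - lam)\<^sup>2"
proof -
  define SL where "SL = Iset cpl eta (real m - 1/2)"
  define SR where "SR = Iset cpl eta (real m + 1/2)"
  have r2_pos: "1 \<le> real (r2 m)" using m(1) unfolding N2_def by simp
  hence "0 < real (r2 (m + 3))" using r2_next g by (smt (verit) divide_pos_pos zero_less_power)
  hence "m + 3 \<in> N2" unfolding N2_def by simp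
  with secular_windows_at_pole[OF m(1) this strong]
  have S: "m \<in> SL" "m + 3 \<in> SL" "m \<in> SR" "m + 3 \<in> SR"
    and close: "\<bar>secular SL (real m) - secular SR (real m)\<bar> \<le> 1/5"
    unfolding SL_def SR_def by auto
  \<comment> \<open>The two windows nearly agree at \<open>m\<close>, so on one side of the pole the offset is at most \<open>1/10\<close>.\<close>
  consider (left) "secular SL (real m) - C \<le> 1/10" | (right) "-1/10 \<le> secular SR (real m) - C"
    using close by linarith
  thus ?thesis
  proof cases
    case left
    then obtain l where l: "real m - g \<le> l" "l < real m" "secular SL l = C"
        "Hsum_off SL m l \<le> (1 + 6 * g) * real (r2 m) / (real m - l)\<^sup>2"
      using secular_root_left[OF g S(1,2) r2_pos r2_next] by blast
    have between: "real (m - 1) < l" "l < real (m - 1) + 1" using l g m(2) by auto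
    have "Iset cpl eta l = SL"
      unfolding SL_def using nplus_left_of[OF m(1)] between l g by (intro Iset_cong_nplus) auto
    thus ?thesis using l not_of_nat_between[OF between]
      by (intro bexI[of _ l]) (auto simp: mem_NewEig_iff Hderiv_eq_Hsum_off)
  next
    case right
    then obtain l where l: "real m < l" "l \<le> real m + g" "secular SR l = C"
        "Hsum_off SR m l \<le> (1 + 6 * g) * real (r2 m) / (real m - l)\<^sup>2"
      using secular_root_right[OF g S(3,4) r2_pos r2_next] by blast
    have between: "real m < l" "l < real m + 1" using l g by auto
    have "Iset cpl eta l = SR" unfolding SR_def by (rule Iset_cong_nplus[OF nplus_right_of[OF between]])
    thus ?thesis using l not_of_nat_between[OF between]
      by (intro bexI[of _ l]) (auto simp: mem_NewEig_iff Hderiv_eq_Hsum_off)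
  qed
qed

lemma eventually_new_eigenvalue_near:
  fixes cpl :: coupling and eta C g :: real and M :: "nat set"
  assumes eta: "cpl = Strong \<longrightarrow> 1/2 < eta \<and> eta < 1"
    and g: "0 < g" "g \<le> 1/10" and M: "is_M_gamma g M"
  shows "\<exists>m0. \<forall>m \<in> M. m0 \<le> m \<longrightarrow> (\<exists>lam \<in> NewEig cpl eta C. \<bar>lam - real m\<bar> \<le> g
           \<and> Hderiv cpl eta m lam \<le> (1 + 6 * g) * real (r2 m) / (real m - lam)\<^sup>2)"
proof -
  have "\<exists>m0. \<forall>m \<ge> m0. cpl = Strong \<longrightarrow> window_large eta m"
    using eta eventually_window_large[of eta] by (cases cpl) (auto simp: eventually_sequentially)
  then obtain m0 where m0: "\<And>m. m0 \<le> m \<Longrightarrow> cpl = Strong \<Longrightarrow> window_large eta m" by auto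
  have "m \<in> N2" "1 \<le> m" "10 * real (r2 m) / g\<^sup>2 \<le> real (r2 (m + 3))" if "m \<in> M" for m
    using M that unfolding is_M_gamma_def by auto
  thus ?thesis using eta g m0 by (intro exI[of _ m0] ballI impI new_eigenvalue_near_pole) auto
qed

theorem proposition5p1:
  "\<exists>K::real. \<forall>(cpl::coupling) (eta::real) (C::real) (gamma::real) (M::nat set).
     (cpl = Strong \<longrightarrow> 131/146 < eta \<and> eta < 1) \<longrightarrow>
     0 < gamma \<longrightarrow> gamma < 1/10 \<longrightarrow> is_M_gamma gamma M \<longrightarrow>
     (\<exists>m0. \<forall>m \<in> M. m \<ge> m0 \<longrightarrow>
        (\<exists>lam \<in> NewEig cpl eta C. \<bar>lam - real m\<bar> \<le> gamma \<and>
           Hderiv cpl eta m lam \<le> (1 + K * gamma) * real (r2 m) / (real m - lam)\<^sup>2))"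
  by (intro exI[of _ 6] allI impI eventually_new_eigenvalue_near) auto

end
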